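(* Suppose that at the unconstrained Nash equilibrium only SP 2's constraint is violated, i.e., $B_{1,S}^{\text{NE}}\ge B_{1,S}^0$ and $B_{2,S}^{\text{NE}}<B_{2,S}^0$. Then the Nash equilibrium with the regulatory constraints is of one of the following two types: Type I. Both SPs allocate exactly the required amount to small-cells, i.e., $B_{1,S}=B_{1,S}^0$, $B_{2,S}=B_{2,S}^0$. Type II. Only SP 2 allocates exactly the required minimum amount of bandwidth to small-cells, i.e., $B_{1,S}>B_{1,S}^0$, $B_{2,S}=B_{2,S}^0$.
   Context: Two competing service providers (SPs), $i=1,2$, each have total licensed bandwidth $B_i$, split into macro-cell bandwidth $B_{i,M}$ and small-cell bandwidth $B_{i,S}$ with $B_{i,M}+B_{i,S}\le B_i$, $B_{i,M}\ge 0$, and regulatory constraint $B_{i,S}\ge B_{i,S}^0$. Macro-cells of SP $i$ provide rate $B_{i,M}R_0$, small-cells provide rate $\lambda_S B_{i,S}R_0$ with $\lambda_S>1$. Mobile users (density $N_m$) can only use macro-cells (with priority); fixed users (density $N_f$) can use macro- or small-cells of either SP. All users have utility $u(r)=r^{1-\alpha}/(1-\alpha)$, $\alpha\in(0,1)$, with demand $D(p)=(1/p)^{1/\alpha}$ at price $p$ per unit rate; users choose the lowest-priced service and fill its capacity. Each SP maximizes its revenue $p_{i,M}K_{i,M}D(p_{i,M})+p_{i,S}K_{i,S}D(p_{i,S})$ in a two-stage game: bandwidth splits first, then prices; the price equilibrium for any fixed bandwidth allocation is the market-clearing price. Without the regulatory constraints there is a unique Nash equilibrium with $B_{i,S}^{\text{NE}}=\frac{N_f\lambda_S^{1/\alpha-1}B_i}{N_f\lambda_S^{1/\alpha-1}+N_m}$,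 $B_{i,M}^{\text{NE}}=\frac{N_mB_i}{N_f\lambda_S^{1/\alpha-1}+N_m}$; with the constraints a Nash equilibrium exists and is unique. *)

theory Defs
  imports Complex_Main
begin

text \<open>Capacities: CM = R0*BM, CS = lam*R0*BS; demand D(p) = p powr (-1/alpha).
If CS/Nf >= CM/Nm the fixed users are served by the (cheaper) small cells and
the mobile users by the macro cells (separate markets); otherwise fixed users
spill over into the macro cells and a common price clears the pooled market.\<close>
definition clearing_prices ::
  "real \<Rightarrow> real \<Rightarrow> real \<Rightarrow> real \<Rightarrow> real \<Rightarrow> real \<Rightarrow> real \<Rightarrow> real \<times> real" where
  "clearing_prices Nm Nf lam alpha R0 BM BS =
     (let CM = R0 * BM; CS = lam * R0 * BS in
      if CS * Nm \<ge> CM * Nf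
      then ((Nm / CM) powr alpha, (Nf / CS) powr alpha)
      else (let p = ((Nm + Nf) / (CM + CS)) powr alpha in (p, p)))"

text \<open>Revenue of an SP with allocation (bm, bs) when the competitor uses (cm, cs):
price times capacity sold (capacity is filled at the market-clearing price).\<close>
definition revenue ::
  "real \<Rightarrow> real \<Rightarrow> real \<Rightarrow> real \<Rightarrow> real \<Rightarrow> real \<times> real \<Rightarrow> real \<times> real \<Rightarrow> real" where
  "revenue Nm Nf lam alpha R0 own other =
     (let (bm, bs) = own; (cm, cs) = other;
          (pM, pS) = clearing_prices Nm Nf lam alpha R0 (bm + cm) (bs + cs)
      in pM * (R0 * bm) + pS * (lam * R0 * bs))"

definition feasible :: "real \<Rightarrow> real \<Rightarrow> real \<times> real \<Rightarrow> bool" where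
  "feasible B B0 a = (0 \<le> fst a \<and> B0 \<le> snd a \<and> fst a + snd a \<le> B)"

definition constrained_NE ::
  "real \<Rightarrow> real \<Rightarrow> real \<Rightarrow> real \<Rightarrow> real \<Rightarrow> real \<Rightarrow> real \<Rightarrow> real \<Rightarrow> real \<Rightarrow>
   real \<times> real \<Rightarrow> real \<times> real \<Rightarrow> bool" where
  "constrained_NE Nm Nf lam alpha R0 B1 B2 B01 B02 a1 a2 =
     (feasible B1 B01 a1 \<and> feasible B2 B02 a2 \<and>
      (\<forall>b1. feasible B1 B01 b1 \<longrightarrow>
         revenue Nm Nf lam alpha R0 b1 a2 \<le> revenue Nm Nf lam alpha R0 a1 a2) \<and>
      (\<forall>b2. feasible B2 B02 b2 \<longrightarrow>
         revenue Nm Nf lam alpha R0 b2 a1 \<le> revenue Nm Nf lam alpha R0 a2 a1))"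

definition BS_NE :: "real \<Rightarrow> real \<Rightarrow> real \<Rightarrow> real \<Rightarrow> real \<Rightarrow> real" where
  "BS_NE Nm Nf lam alpha B =
     Nf * lam powr (1 / alpha - 1) * B / (Nf * lam powr (1 / alpha - 1) + Nm)"

end

theory Submission
  imports Defs
begin

text \<open>In the separate-markets regime an SP holding \<open>m\<close> of the total macro bandwidth \<open>M\<close> and
\<open>s\<close> of the total small-cell bandwidth \<open>S\<close> earns \<open>P m + Q s\<close>, with \<open>P\<close>, \<open>Q\<close> the clearing
revenues per unit of bandwidth; shifting bandwidth between the tiers changes this at the rates
\<open>P (1 - \<alpha> m/M)\<close> and \<open>Q (1 - \<alpha> s/S)\<close>. If SP 2 kept more small-cell bandwidth than required, it
could shift in both directions, so its two rates must balance; SP 1 either balances as well or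
sits at its own minimum, which by hypothesis is at most the unconstrained-equilibrium ratio.
Since SP 2's allocation then exceeds that ratio, these conditions are incompatible, because
\<open>P < Q\<close> holds exactly when \<open>S N\<^sub>m < \<lambda>\<^bsup>1/\<alpha>-1\<^esup> N\<^sub>f M\<close>. The remaining regimes (no macro
bandwidth, pooled prices) admit no such equilibrium at all.\<close>

text \<open>Revenue per unit of bandwidth of a tier providing rate \<open>k\<close> per unit of bandwidth, when its
total bandwidth \<open>X\<close> serves \<open>N\<close> users at the market-clearing price \<open>(N / (k X)) powr al\<close>.\<close>

definition unit_revenue :: "real \<Rightarrow> real \<Rightarrow> real \<Rightarrow> real \<Rightarrow> real" where
  "unit_revenue al N k X = k * (N / (k * X)) powr al"

lemma unit_revenue_pos: "0 < N \<Longrightarrow> 0 < k \<Longrightarrow> 0 < X \<Longrightarrow> 0 < unit_revenue al N k X"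
  by (simp add: unit_revenue_def)

lemma unit_revenue_less_iff:
  assumes "0 < al" "0 < k" "0 < N" "0 < X" "0 < N'" "0 < X'"
  shows "unit_revenue al N k X < unit_revenue al N' k X' \<longleftrightarrow> N / X < N' / X'"
proof -
  have "unit_revenue al N k X < unit_revenue al N' k X' \<longleftrightarrow> N / (k * X) < N' / (k * X')"
    using assms powr_less_mono2[of al "N / (k * X)" "N' / (k * X')"]
      powr_less_cancel2[of al "N / (k * X)" "N' / (k * X')"]
    by (auto simp: unit_revenue_def)
  also have "\<dots> \<longleftrightarrow> N / X < N' / X'"
    using assms by (simp add: frac_less_eq field_simps)
  finally show ?thesis .
qed

lemma unit_revenue_antimono:
  assumes "0 \<le> al" "0 < k" "0 \<le> N" "0 < X" "X \<le> Y"
  shows "unit_revenue al N k Y \<le> unit_revenue al N k X"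
  using assms by (auto simp: unit_revenue_def intro!: powr_mono2 divide_left_mono)

lemma unit_revenue_gt:
  assumes "0 < al" "0 < k" "0 < N" "0 < c" "0 < X" "X < N / (k * (c / k) powr (1 / al))"
  shows "c < unit_revenue al N k X"
proof -
  have "(c / k) powr (1 / al) < N / (k * X)"
    using assms by (simp add: field_simps)
  then have "((c / k) powr (1 / al)) powr al < (N / (k * X)) powr al"
    using assms by (intro powr_less_mono2) auto
  then have "c / k < (N / (k * X)) powr al"
    using assms by (simp add: powr_powr)
  then show ?thesis
    using assms by (simp add: unit_revenue_def field_simps)
qed

lemma unit_revenue_scale:
  assumes "0 < al" "0 < lam" "0 < R0" "0 < N" "0 < X"
  shows "unit_revenue al N (lam * R0) X = unit_revenue al (lam powr (1 / al - 1) * N) R0 X"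
proof -
  have "(1 / al - 1) * al = 1 + - al"
    using assms by (simp add: field_simps)
  then have "(lam powr (1 / al - 1)) powr al = lam * lam powr (- al)"
    using assms powr_add[of lam 1 "- al"] by (simp add: powr_powr)
  moreover have "(lam powr (1 / al - 1) * N / (R0 * X)) powr al
      = (lam powr (1 / al - 1)) powr al * (N / (R0 * X)) powr al"
    unfolding times_divide_eq_right[symmetric] using assms by (intro powr_mult)
  ultimately have "(lam powr (1 / al - 1) * N / (R0 * X)) powr al
      = lam * lam powr (- al) * (N / (R0 * X)) powr al"
    by simp
  also have "\<dots> = lam * (N / (lam * R0 * X)) powr al"
  proof -
    have "N / (lam * R0 * X) = (N / (R0 * X)) / lam"
      by (simp add: mult.assoc)
    then have "(N / (lam * R0 * X)) powr al = (N / (R0 * X)) powr al / lam powr al"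
      using assms powr_divide[of "N / (R0 * X)" lam al] by (simp add: ac_simps)
    then show ?thesis
      by (simp add: powr_minus divide_inverse)
  qed
  finally show ?thesis
    by (simp add: unit_revenue_def mult.assoc)
qed

lemma revenue_separate:
  assumes "0 < R0" "(m + cm) * Nf \<le> lam * (s + cs) * Nm"
  shows "revenue Nm Nf lam al R0 (m, s) (cm, cs) =
    unit_revenue al Nm R0 (m + cm) * m + unit_revenue al Nf (lam * R0) (s + cs) * s"
proof -
  have "R0 * (m + cm) * Nf \<le> lam * R0 * (s + cs) * Nm"
    using mult_left_mono[OF assms(2) less_imp_le[OF assms(1)]] by (simp add: ac_simps)
  then show ?thesis
    unfolding revenue_def clearing_prices_def unit_revenue_def by (simp add: Let_def ac_simps)
qed

lemma revenue_pooled: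
  assumes "0 < R0" "lam * (s + cs) * Nm < (m + cm) * Nf"
  shows "revenue Nm Nf lam al R0 (m, s) (cm, cs) =
    ((Nm + Nf) / (R0 * (m + cm) + lam * R0 * (s + cs))) powr al * (R0 * m + lam * R0 * s)"
proof -
  have "lam * R0 * (s + cs) * Nm < R0 * (m + cm) * Nf"
    using mult_strict_left_mono[OF assms(2) assms(1)] by (simp add: ac_simps)
  then show ?thesis
    unfolding revenue_def clearing_prices_def by (simp add: Let_def algebra_simps)
qed

lemma DERIV_inverse_affine_powr:
  fixes c a d al :: real
  assumes "0 < c" "0 < a"
  shows "((\<lambda>e. (c / (a + d * e)) powr al) has_real_derivative - (al * d / a) * (c / a) powr al) (at 0)"
proof -
  have "((\<lambda>e. c / (a + d * e)) has_real_derivative - c * d / a\<^sup>2) (at 0)"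
    using assms by (auto intro!: derivative_eq_intros simp: power2_eq_square)
  from DERIV_powr[OF this _ DERIV_const] assms show ?thesis
    by (simp add: field_simps power2_eq_square)
qed

lemma DERIV_unit_revenue_mult:
  fixes N k X x d al :: real
  assumes "0 < N" "0 < k" "0 < X"
  shows "((\<lambda>e. unit_revenue al N k (X + d * e) * (x + d * e)) has_real_derivative
           d * unit_revenue al N k X * (1 - al * x / X)) (at 0)"
proof -
  have price: "((\<lambda>e. (N / (k * (X + d * e))) powr al) has_real_derivative
          - (al * d / X) * (N / (k * X)) powr al) (at 0)"
    using DERIV_inverse_affine_powr[of N "k * X" "k * d" al] assms
    by (simp add: distrib_left mult.assoc)
  have "((\<lambda>e. x + d * e) has_real_derivative d) (at 0)"
    by (auto intro!: derivative_eq_intros)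
  from DERIV_mult[OF DERIV_cmult[OF price, of k] this] assms show ?thesis
    unfolding unit_revenue_def by (simp add: algebra_simps)
qed

lemma DERIV_pos_imp_not_max_right:
  fixes g R :: "real \<Rightarrow> real"
  assumes "(g has_real_derivative D) (at 0)" "0 < D"
    and "\<forall>\<^sub>F e in at_right 0. R e = g e \<and> P e" "R 0 = g 0"
    and "\<And>e. P e \<Longrightarrow> R e \<le> R 0"
  shows False
proof -
  obtain d where "0 < d" and inc: "\<And>h. 0 < h \<Longrightarrow> h < d \<Longrightarrow> g 0 < g (0 + h)"
    using DERIV_pos_inc_right[OF assms(1,2)] by blast
  moreover have "\<forall>\<^sub>F e in at_right 0. e < d"
    using \<open>0 < d\<close> eventually_at_right_field by blast
  ultimately have "\<forall>\<^sub>F e in at_right 0. e < d \<and> R e = g e \<and> P e"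
    using assms(3) eventually_conj by blast
  then have "\<forall>\<^sub>F e in at_right 0. 0 < e \<and> e < d \<and> R e = g e \<and> P e"
    using eventually_at_right_less eventually_conj by blast
  then obtain e where "0 < e" "e < d" "R e = g e" "P e"
    using eventually_happens' trivial_limit_at_right_real by blast
  with inc[of e] assms(4) assms(5)[of e] show False by simp
qed

lemma eventually_at_right_affine_pos:
  fixes a b :: real
  assumes "0 < a"
  shows "\<forall>\<^sub>F e in at_right 0. 0 < a + b * e"
proof -
  have "((\<lambda>e. a + b * e) \<longlongrightarrow> a + b * 0) (at_right 0)"
    by (intro tendsto_intros)
  from order_tendstoD(1)[OF this, of 0] assms show ?thesis
    by simp
qed

text \<open>In the next three lemmas \<open>P\<close>, \<open>Q\<close> are the revenues per unit of macro and small-cell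
bandwidth, \<open>u\<close>, \<open>v\<close> are SP 2's shares of the total small-cell bandwidth \<open>S\<close> and macro bandwidth
\<open>M\<close>, and \<open>K = \<lambda>\<^bsup>1/\<alpha>-1\<^esup> N\<^sub>f\<close>. The hypotheses \<open>shift\<close> say that no SP gains by moving bandwidth from
macro to small cells, \<open>back\<close> the converse, and \<open>excess\<close> that SP 2 exceeds the unconstrained
equilibrium ratio \<open>K : N\<^sub>m\<close>.\<close>

lemma margin_shift_conditions_imp_le:
  fixes P Q al u v :: real
  assumes "0 \<le> Q" "0 < al" "al < 1" "0 \<le> u" "u \<le> 1" "0 \<le> v" "v \<le> 1"
    and shift1: "v < 1 \<Longrightarrow> Q * (1 - al * (1 - u)) \<le> P * (1 - al * (1 - v))"
    and shift2: "0 < v \<Longrightarrow> Q * (1 - al * u) \<le> P * (1 - al * v)"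
  shows "Q \<le> P"
proof -
  consider "v = 0" | "v = 1" | "0 < v \<and> v < 1"
    using assms by linarith
  then show ?thesis
  proof cases
    case 1
    have "Q * (1 - al) \<le> Q * (1 - al * (1 - u))"
      using assms by (intro mult_left_mono) (auto simp: algebra_simps)
    with shift1 1 have "Q * (1 - al) \<le> P * (1 - al)" by simp
    with \<open>al < 1\<close> show ?thesis by simp
  next
    case 2
    have "Q * (1 - al) \<le> Q * (1 - al * u)"
      using assms by (intro mult_left_mono) (auto simp: algebra_simps mult_left_le)
    with shift2 2 have "Q * (1 - al) \<le> P * (1 - al)" by simp
    with \<open>al < 1\<close> show ?thesis by simp
  next
    case 3
    with shift1 shift2 have "Q * (2 - al) \<le> P * (2 - al)"
      by (fastforce simp: algebra_simps dest: add_mono)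
    with \<open>al < 1\<close> show ?thesis by simp
  qed
qed

lemma margin_conditions_interior_absurd:
  fixes P Q al u v S M K Nm :: real
  assumes "0 < Q" "0 < al" "al < 1" "0 < S" "0 < M" "0 < Nm" "0 < v" "v < 1"
    and excess: "K * (v * M) < u * S * Nm"
    and price: "K * M < S * Nm \<Longrightarrow> Q < P"
    and shift1: "Q * (1 - al * (1 - u)) \<le> P * (1 - al * (1 - v))"
    and balance2: "Q * (1 - al * u) = P * (1 - al * v)"
    and back1: "P * (1 - al * (1 - v)) \<le> Q * (1 - al * (1 - u))
                \<or> (1 - u) * S * Nm \<le> K * ((1 - v) * M)"
  shows False
proof -
  have "Q * (2 - al) \<le> P * (2 - al)"
    using shift1 balance2 by (simp add: algebra_simps)
  then have "Q \<le> P"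
    using \<open>al < 1\<close> by simp
  have "u \<le> v"
  proof (rule ccontr)
    assume "\<not> u \<le> v"
    then have "Q * (1 - al * u) < Q * (1 - al * v)"
      using \<open>0 < Q\<close> \<open>0 < al\<close> by simp
    also have "\<dots> \<le> P * (1 - al * v)"
      using \<open>Q \<le> P\<close> \<open>al < 1\<close> \<open>0 < v\<close> \<open>v < 1\<close> mult_strict_mono[of al 1 v 1]
      by (intro mult_right_mono) auto
    finally show False
      using balance2 by simp
  qed
  from back1 show False
  proof
    assume "P * (1 - al * (1 - v)) \<le> Q * (1 - al * (1 - u))"
    with shift1 balance2 have "P * (2 - al) = Q * (2 - al)"
      by (simp add: algebra_simps)
    then have "P = Q"
      using \<open>al < 1\<close> by simp
    with balance2 \<open>0 < Q\<close> \<open>0 < al\<close> have "u = v"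
      by simp
    have "S * Nm \<le> K * M"
      using price \<open>P = Q\<close> by fastforce
    then have "S * Nm * v \<le> K * M * v"
      using \<open>0 < v\<close> by simp
    with excess \<open>u = v\<close> show False
      by (simp add: algebra_simps)
  next
    assume min1: "(1 - u) * S * Nm \<le> K * ((1 - v) * M)"
    have "u * (1 - v) * (S * M * Nm) \<le> v * (1 - u) * (S * M * Nm)"
      using \<open>u \<le> v\<close> assms by (intro mult_right_mono) (auto simp: algebra_simps)
    moreover have "K * (v * M) * ((1 - v) * M) < u * S * Nm * ((1 - v) * M)"
      using excess assms by (intro mult_strict_right_mono) auto
    moreover have "v * M * ((1 - u) * S * Nm) \<le> v * M * (K * ((1 - v) * M))"
      using min1 assms by (intro mult_left_mono) auto
    ultimately show False
      by (simp add: algebra_simps)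
  qed
qed

lemma margin_conditions_absurd:
  fixes P Q al u v S M K Nm :: real
  assumes "0 < Q" "0 < al" "al < 1" "0 < S" "0 < M" "0 < Nm"
    and "0 < u" "u \<le> 1" "0 \<le> v" "v \<le> 1"
    and excess: "K * (v * M) < u * S * Nm"
    and price: "K * M < S * Nm \<Longrightarrow> Q < P"
    and shift1: "v < 1 \<Longrightarrow> Q * (1 - al * (1 - u)) \<le> P * (1 - al * (1 - v))"
    and shift2: "0 < v \<Longrightarrow> Q * (1 - al * u) \<le> P * (1 - al * v)"
    and back2: "P * (1 - al * v) \<le> Q * (1 - al * u)"
    and back1: "P * (1 - al * (1 - v)) \<le> Q * (1 - al * (1 - u))
                \<or> (1 - u) * S * Nm \<le> K * ((1 - v) * M)"
    and back1_full: "v = 1 \<Longrightarrow> P * (1 - al * (1 - v)) \<le> Q * (1 - al * (1 - u))"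
  shows False
proof -
  consider "v = 0" | "v = 1" | "0 < v \<and> v < 1"
    using assms by linarith
  then show False
  proof cases
    case 1
    with shift1 back2 have "Q * (1 - al * (1 - u)) \<le> Q * (1 - al * u) * (1 - al)"
      using \<open>al < 1\<close> by (auto intro: order_trans mult_right_mono)
    then have "al * u * (2 - al) \<le> 0"
      using \<open>0 < Q\<close> by (simp add: algebra_simps)
    with assms show False
      by (simp add: mult_le_0_iff)
  next
    case 2
    have "u * (S * Nm) \<le> S * Nm"
      using assms by (intro mult_left_le_one_le) auto
    with excess 2 have "K * M < S * Nm"
      by (simp add: mult.assoc)
    then have "Q < P" by (rule price)
    moreover have "P \<le> Q * (1 - al * (1 - u))"
      using back1_full 2 by simp
    moreover have "Q * (1 - al * (1 - u)) \<le> Q"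
      using assms by (simp add: mult_left_le)
    ultimately show False by simp
  next
    case 3
    with shift2 back2 have "Q * (1 - al * u) = P * (1 - al * v)"
      by fastforce
    with 3 assms show False
      by (intro margin_conditions_interior_absurd[of Q al S M Nm v K u P]) auto
  qed
qed

locale spectrum_market =
  fixes Nm Nf lam al R0 :: real
  assumes Nm_pos: "0 < Nm" and Nf_pos: "0 < Nf" and lam_gt_1: "1 < lam"
    and al_pos: "0 < al" and al_lt_1: "al < 1" and R0_pos: "0 < R0"
begin

abbreviation payoff :: "real \<times> real \<Rightarrow> real \<times> real \<Rightarrow> real" where
  "payoff \<equiv> revenue Nm Nf lam al R0"

abbreviation macro_value :: "real \<Rightarrow> real" where
  "macro_value \<equiv> unit_revenue al Nm R0"

abbreviation small_value :: "real \<Rightarrow> real" where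
  "small_value \<equiv> unit_revenue al Nf (lam * R0)"

text \<open>The unconstrained equilibrium splits every SP's bandwidth between small and macro cells in
the ratio \<open>Nf_eff : Nm\<close>.\<close>

abbreviation Nf_eff :: real where
  "Nf_eff \<equiv> lam powr (1 / al - 1) * Nf"

definition best_response :: "real \<Rightarrow> real \<Rightarrow> real \<times> real \<Rightarrow> real \<times> real \<Rightarrow> bool" where
  "best_response B B0 own other \<longleftrightarrow>
     feasible B B0 own \<and> (\<forall>b. feasible B B0 b \<longrightarrow> payoff b other \<le> payoff own other)"

lemma constrained_NE_iff:
  "constrained_NE Nm Nf lam al R0 B1 B2 B01 B02 a1 a2 \<longleftrightarrow>
     best_response B1 B01 a1 a2 \<and> best_response B2 B02 a2 a1"
  unfolding constrained_NE_def best_response_def by blast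

lemma best_response_feasible: "best_response B B0 a b \<Longrightarrow> feasible B B0 a"
  unfolding best_response_def by blast

lemma best_response_separate_derivative_nonpos:
  assumes best: "best_response B B0 (m, s) (cm, cs)"
    and pos: "0 < m + cm" "0 < s + cs"
    and sep: "(m + cm) * Nf \<le> lam * (s + cs) * Nm"
    and dir: "\<forall>\<^sub>F e in at_right 0. (m + dm * e + cm) * Nf \<le> lam * (s + ds * e + cs) * Nm
                 \<and> feasible B B0 (m + dm * e, s + ds * e)"
  shows "dm * macro_value (m + cm) * (1 - al * m / (m + cm))
       + ds * small_value (s + cs) * (1 - al * s / (s + cs)) \<le> 0"
proof (rule ccontr)
  let ?g = "\<lambda>e. macro_value (m + cm + dm * e) * (m + dm * e)
              + small_value (s + cs + ds * e) * (s + ds * e)"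
  let ?R = "\<lambda>e. payoff (m + dm * e, s + ds * e) (cm, cs)"
  have R_eq: "?R e = ?g e" if "(m + dm * e + cm) * Nf \<le> lam * (s + ds * e + cs) * Nm" for e
    using revenue_separate[OF R0_pos that] by (simp add: ac_simps)
  have deriv: "(?g has_real_derivative dm * macro_value (m + cm) * (1 - al * m / (m + cm))
       + ds * small_value (s + cs) * (1 - al * s / (s + cs))) (at 0)"
    using Nm_pos Nf_pos lam_gt_1 R0_pos pos
    by (intro DERIV_add DERIV_unit_revenue_mult) auto
  assume "\<not> ?thesis"
  then have "0 < dm * macro_value (m + cm) * (1 - al * m / (m + cm))
       + ds * small_value (s + cs) * (1 - al * s / (s + cs))" by simp
  then show False
  proof (rule DERIV_pos_imp_not_max_right[OF deriv _, where R = ?R])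
    show "\<forall>\<^sub>F e in at_right 0. ?R e = ?g e \<and> feasible B B0 (m + dm * e, s + ds * e)"
      using dir by eventually_elim (simp add: R_eq)
    show "?R 0 = ?g 0"
      using R_eq[of 0] sep by simp
    show "?R e \<le> ?R 0" if "feasible B B0 (m + dm * e, s + ds * e)" for e
      using best that unfolding best_response_def by simp
  qed
qed

lemma best_response_macro_condition:
  assumes best: "best_response B B0 (m, s) (cm, cs)"
    and "0 < m" "0 \<le> cm" "0 < s + cs" and sep: "(m + cm) * Nf \<le> lam * (s + cs) * Nm"
  shows "small_value (s + cs) * (1 - al * s / (s + cs)) \<le> macro_value (m + cm) * (1 - al * m / (m + cm))"
proof -
  have "\<forall>\<^sub>F e in at_right 0. 0 < e \<and> 0 < m + (-1) * e"
    using eventually_at_right_less eventually_at_right_affine_pos[OF \<open>0 < m\<close>] eventually_conj by blast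
  then have "\<forall>\<^sub>F e in at_right 0. (m + (-1) * e + cm) * Nf \<le> lam * (s + 1 * e + cs) * Nm
               \<and> feasible B B0 (m + (-1) * e, s + 1 * e)"
  proof eventually_elim
    case (elim e)
    have "(m + (-1) * e + cm) * Nf \<le> (m + cm) * Nf" "lam * (s + cs) * Nm \<le> lam * (s + 1 * e + cs) * Nm"
      using elim Nf_pos Nm_pos lam_gt_1 by (simp_all add: algebra_simps)
    with sep elim best_response_feasible[OF best] show ?case
      by (auto simp: feasible_def)
  qed
  from best_response_separate_derivative_nonpos[OF best _ _ sep this] assms show ?thesis
    by simp
qed

lemma best_response_small_condition:
  assumes best: "best_response B B0 (m, s) (cm, cs)"
    and "B0 < s" "0 < m + cm" "0 < s + cs" and sep: "(m + cm) * Nf < lam * (s + cs) * Nm"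
  shows "macro_value (m + cm) * (1 - al * m / (m + cm)) \<le> small_value (s + cs) * (1 - al * s / (s + cs))"
proof -
  have "\<forall>\<^sub>F e in at_right 0. 0 < e \<and> 0 < (s - B0) + (-1) * e
          \<and> 0 < (lam * (s + cs) * Nm - (m + cm) * Nf) + (- (Nf + lam * Nm)) * e"
    using assms(2) sep
    by (intro eventually_conj eventually_at_right_less eventually_at_right_affine_pos) auto
  then have "\<forall>\<^sub>F e in at_right 0. (m + 1 * e + cm) * Nf \<le> lam * (s + (-1) * e + cs) * Nm
               \<and> feasible B B0 (m + 1 * e, s + (-1) * e)"
    by eventually_elim
      (use best_response_feasible[OF best] in \<open>auto simp: feasible_def algebra_simps\<close>)
  from best_response_separate_derivative_nonpos[OF best assms(3,4) less_imp_le[OF sep] this]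
  show ?thesis by simp
qed

lemma best_response_full_band:
  assumes best: "best_response B B0 (m, s) (cm, cs)"
    and "0 \<le> cm" "0 < m + cm" "0 < s + cs" and sep: "(m + cm) * Nf < lam * (s + cs) * Nm"
  shows "m + s = B"
proof (rule ccontr)
  have feas: "0 \<le> m" "B0 \<le> s" "m + s \<le> B"
    using best_response_feasible[OF best] by (auto simp: feasible_def)
  assume "m + s \<noteq> B"
  with feas have "\<forall>\<^sub>F e in at_right 0. 0 < e \<and> 0 < (B - m - s) + (-1) * e
          \<and> 0 < (lam * (s + cs) * Nm - (m + cm) * Nf) + (- Nf) * e"
    using sep by (intro eventually_conj eventually_at_right_less eventually_at_right_affine_pos) auto
  then have "\<forall>\<^sub>F e in at_right 0. (m + 1 * e + cm) * Nf \<le> lam * (s + 0 * e + cs) * Nm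
               \<and> feasible B B0 (m + 1 * e, s + 0 * e)"
    by eventually_elim (use feas in \<open>auto simp: feasible_def algebra_simps\<close>)
  from best_response_separate_derivative_nonpos[OF best assms(3,4) less_imp_le[OF sep] this]
  have "macro_value (m + cm) * (1 - al * m / (m + cm)) \<le> 0" by simp
  moreover have "al * m < m + cm"
    using al_lt_1 al_pos feas assms(2,3) by (cases "m = 0") (auto intro: order.strict_trans2[OF mult_strict_right_mono])
  then have "0 < 1 - al * m / (m + cm)"
    using assms(3) by simp
  ultimately show False
    using unit_revenue_pos[OF Nm_pos R0_pos assms(3), of al] by (simp add: mult_le_0_iff)
qed

text \<open>In the pooled regime both tiers sell at one price, so shifting bandwidth from macro to small
cells multiplies its capacity by \<open>\<lambda>\<close> while the price falls only at the relative rate \<open>\<alpha> < 1\<close>.\<close>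

lemma best_response_with_macro_separates:
  assumes best: "best_response B B0 (m, s) (cm, cs)"
    and "0 < m" "0 \<le> cm" "0 \<le> cs" "0 \<le> B0"
  shows "(m + cm) * Nf \<le> lam * (s + cs) * Nm"
proof (rule ccontr)
  assume "\<not> ?thesis"
  then have pool: "lam * (s + cs) * Nm < (m + cm) * Nf" by simp
  have feas: "B0 \<le> s" "m + s \<le> B"
    using best_response_feasible[OF best] by (auto simp: feasible_def)
  define T where "T = R0 * (m + cm) + lam * R0 * (s + cs)"
  define X where "X = R0 * m + lam * R0 * s"
  define d where "d = R0 * (lam - 1)"
  have "0 < X" "0 < d"
    using assms feas R0_pos lam_gt_1 by (auto simp: X_def d_def intro!: add_pos_nonneg)
  have "X \<le> T"
    using assms R0_pos lam_gt_1 by (simp add: X_def T_def algebra_simps)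
  let ?g = "\<lambda>e. unit_revenue al (Nm + Nf) 1 (T + d * e) * (X + d * e)"
  let ?R = "\<lambda>e. payoff (m - e, s + e) (cm, cs)"
  have R_eq: "?R e = ?g e" if "lam * (s + e + cs) * Nm < (m - e + cm) * Nf" for e
    using revenue_pooled[OF R0_pos that]
    by (simp add: unit_revenue_def T_def X_def d_def algebra_simps)
  have deriv: "(?g has_real_derivative d * unit_revenue al (Nm + Nf) 1 T * (1 - al * X / T)) (at 0)"
    using Nm_pos Nf_pos \<open>0 < X\<close> \<open>X \<le> T\<close> by (intro DERIV_unit_revenue_mult) auto
  have "al * X < T"
    using mult_strict_right_mono[OF al_lt_1 \<open>0 < X\<close>] \<open>X \<le> T\<close> by linarith
  then have "al * X / T < 1"
    using \<open>0 < X\<close> \<open>X \<le> T\<close> by simp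
  then have "0 < d * unit_revenue al (Nm + Nf) 1 T * (1 - al * X / T)"
    using \<open>0 < d\<close> \<open>0 < X\<close> \<open>X \<le> T\<close> Nm_pos Nf_pos by (simp add: unit_revenue_pos)
  then show False
  proof (rule DERIV_pos_imp_not_max_right[OF deriv _, where R = ?R])
    have "\<forall>\<^sub>F e in at_right 0. 0 < e \<and> 0 < m + (-1) * e
            \<and> 0 < ((m + cm) * Nf - lam * (s + cs) * Nm) + (- (Nf + lam * Nm)) * e"
      using assms(2) pool
      by (intro eventually_conj eventually_at_right_less eventually_at_right_affine_pos) auto
    then show "\<forall>\<^sub>F e in at_right 0. ?R e = ?g e \<and> feasible B B0 (m - e, s + e)"
    proof eventually_elim
      case (elim e)
      then have "lam * (s + e + cs) * Nm < (m - e + cm) * Nf"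
        by (simp add: algebra_simps)
      with elim feas show ?case
        by (simp add: R_eq feasible_def)
    qed
    show "?R 0 = ?g 0"
      using R_eq[of 0] pool by simp
    show "?R e \<le> ?R 0" if "feasible B B0 (m - e, s + e)" for e
      using best that unfolding best_response_def by simp
  qed
qed

text \<open>Without macro bandwidth the mobile users' price is unbounded, so moving a little small-cell
bandwidth above the minimum to macro cells pays off.\<close>

lemma best_response_without_macro_at_minimum:
  assumes best: "best_response B B0 (0, s) (0, cs)" and "0 \<le> cs" "0 \<le> B0"
  shows "s = B0"
proof (rule ccontr)
  have feas: "B0 \<le> s" "s \<le> B"
    using best_response_feasible[OF best] by (auto simp: feasible_def)
  assume "s \<noteq> B0"
  with feas have "B0 < s" by simp
  define S where "S = s + cs"
  have "0 < S"
    using \<open>B0 < s\<close> assms(2,3) by (simp add: S_def)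
  have "0 < small_value S"
    using Nf_pos lam_gt_1 R0_pos \<open>0 < S\<close> by (simp add: unit_revenue_pos)
  define t where "t = Nm / (R0 * (small_value S / R0) powr (1 / al))"
  have "0 < t"
    using Nm_pos R0_pos \<open>0 < small_value S\<close> by (simp add: t_def)
  have "\<forall>\<^sub>F e in at_right 0. 0 < e \<and> 0 < (s - B0) + (-1) * e
          \<and> 0 < lam * S * Nm + (- (lam * Nm + Nf)) * e \<and> 0 < t + (-1) * e"
    using \<open>B0 < s\<close> \<open>0 < S\<close> \<open>0 < t\<close> Nm_pos lam_gt_1
    by (intro eventually_conj eventually_at_right_less eventually_at_right_affine_pos) auto
  then obtain e where e: "0 < e" "e < s - B0" "e * Nf \<le> lam * (s - e + cs) * Nm" "e < t"
    using eventually_happens'[OF trivial_limit_at_right_real]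
    by (fastforce simp: S_def algebra_simps)
  have "(0 + 0) * Nf \<le> lam * (s + cs) * Nm"
    using \<open>0 < S\<close> Nm_pos lam_gt_1 by (simp add: S_def)
  from revenue_separate[OF R0_pos this]
  have "payoff (0, s) (0, cs) = small_value S * s"
    by (simp add: S_def)
  also have "\<dots> = small_value S * e + small_value S * (s - e)"
    by (simp add: algebra_simps)
  also have "\<dots> < macro_value e * e + small_value (S - e) * (s - e)"
  proof (rule add_less_le_mono)
    show "small_value S * e < macro_value e * e"
      using unit_revenue_gt[OF al_pos R0_pos Nm_pos \<open>0 < small_value S\<close> \<open>0 < e\<close>] e
      by (simp add: t_def)
    show "small_value S * (s - e) \<le> small_value (S - e) * (s - e)"
      using e assms(2,3) al_pos lam_gt_1 R0_pos Nf_pos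
      by (intro mult_right_mono unit_revenue_antimono) (auto simp: S_def)
  qed
  also have "\<dots> = payoff (e, s - e) (0, cs)"
    using revenue_separate[OF R0_pos, of e 0 Nf lam "s - e" cs Nm al] e
    by (simp add: S_def algebra_simps)
  finally have "payoff (0, s) (0, cs) < payoff (e, s - e) (0, cs)" .
  moreover have "feasible B B0 (e, s - e)"
    using e feas by (simp add: feasible_def)
  ultimately show False
    using best unfolding best_response_def by fastforce
qed

lemma macro_value_less_small_value_iff:
  assumes "0 < M" "0 < S"
  shows "macro_value M < small_value S \<longleftrightarrow> S * Nm < lam powr (1 / al - 1) * Nf * M"
  using unit_revenue_scale[OF al_pos _ R0_pos Nf_pos \<open>0 < S\<close>, of lam]
    unit_revenue_less_iff[OF al_pos R0_pos Nm_pos \<open>0 < M\<close>, of "lam powr (1 / al - 1) * Nf" S]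
    assms Nf_pos lam_gt_1
  by (simp add: field_simps)

lemma small_value_less_macro_value_iff:
  assumes "0 < M" "0 < S"
  shows "small_value S < macro_value M \<longleftrightarrow> lam powr (1 / al - 1) * Nf * M < S * Nm"
  using unit_revenue_scale[OF al_pos _ R0_pos Nf_pos \<open>0 < S\<close>, of lam]
    unit_revenue_less_iff[OF al_pos R0_pos _ \<open>0 < S\<close> Nm_pos \<open>0 < M\<close>, of "lam powr (1 / al - 1) * Nf"]
    assms Nf_pos lam_gt_1
  by (simp add: field_simps)

lemma Nf_lt_Nf_eff: "Nf < Nf_eff"
proof -
  have "1 < 1 / al"
    using al_pos al_lt_1 by (simp add: field_simps)
  then have "1 < lam powr (1 / al - 1)"
    using lam_gt_1 by (intro gr_one_powr) auto
  then show ?thesis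
    using Nf_pos by simp
qed

lemma best_responses_separate:
  assumes br1: "best_response B1 B01 (b1M, b1S) (b2M, b2S)"
    and br2: "best_response B2 B02 (b2M, b2S) (b1M, b1S)"
    and "0 \<le> B01" "0 \<le> B02" "0 < b1M + b2M"
  shows "(b1M + b2M) * Nf \<le> lam * (b1S + b2S) * Nm"
proof -
  have f1: "0 \<le> b1M" "B01 \<le> b1S" and f2: "0 \<le> b2M" "B02 \<le> b2S"
    using best_response_feasible[OF br1] best_response_feasible[OF br2] by (auto simp: feasible_def)
  show ?thesis
  proof (cases "0 < b1M")
    case True
    then show ?thesis
      using best_response_with_macro_separates[OF br1 _ f2(1)] assms(3,4) f2(2) by simp
  next
    case False
    with assms(5) f1 have "0 < b2M" by simp
    then show ?thesis
      using best_response_with_macro_separates[OF br2 _ f1(1)] assms(3,4) f1(2)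
      by (simp add: ac_simps)
  qed
qed

lemma best_responses_off_regime_boundary:
  assumes br1: "best_response B1 B01 (b1M, b1S) (b2M, b2S)"
    and br2: "best_response B2 B02 (b2M, b2S) (b1M, b1S)"
    and "0 \<le> B01" "0 \<le> B02" "0 < b1M + b2M"
    and boundary: "(b1M + b2M) * Nf = lam * (b1S + b2S) * Nm"
  shows False
proof -
  have f1: "0 \<le> b1M" "B01 \<le> b1S" and f2: "0 \<le> b2M" "B02 \<le> b2S"
    using best_response_feasible[OF br1] best_response_feasible[OF br2] by (auto simp: feasible_def)
  define M S where "M = b1M + b2M" and "S = b1S + b2S"
  have "0 < M" and swap: "b2M + b1M = M" "b2S + b1S = S"
    using assms by (auto simp: M_def S_def)
  have "0 < (b1M + b2M) * Nf"
    using \<open>0 < M\<close> Nf_pos by (simp add: M_def)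
  then have "0 < lam * S * Nm"
    by (simp only: boundary S_def)
  then have "0 < S"
    using Nm_pos lam_gt_1 by (simp add: zero_less_mult_iff)
  define u v where "u = b2S / S" and "v = b2M / M"
  have one_minus: "1 - u = b1S / S" "1 - v = b1M / M"
    using \<open>0 < M\<close> \<open>0 < S\<close> by (simp_all add: u_def v_def M_def S_def field_simps)
  have "0 \<le> u" "u \<le> 1" "0 \<le> v" "v \<le> 1"
    using assms f1 f2 \<open>0 < M\<close> \<open>0 < S\<close> by (simp_all add: u_def v_def M_def S_def)
  have v_pos: "0 < v \<longleftrightarrow> 0 < b2M" and v_lt_1: "v < 1 \<longleftrightarrow> 0 < b1M"
    using \<open>0 < M\<close> by (auto simp: v_def M_def field_simps)
  have sep1: "(b1M + b2M) * Nf \<le> lam * (b1S + b2S) * Nm"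
   and sep2: "(b2M + b1M) * Nf \<le> lam * (b2S + b1S) * Nm"
    using boundary by (simp_all add: ac_simps)
  have shift1: "small_value S * (1 - al * (1 - u)) \<le> macro_value M * (1 - al * (1 - v))" if "v < 1"
    using best_response_macro_condition[OF br1 _ f2(1) _ sep1] that v_lt_1 \<open>0 < S\<close> one_minus
    by (simp add: M_def S_def)
  have shift2: "small_value S * (1 - al * u) \<le> macro_value M * (1 - al * v)" if "0 < v"
    using best_response_macro_condition[OF br2 _ f1(1) _ sep2] that v_pos \<open>0 < S\<close>
    by (simp add: u_def v_def swap)
  have "S * Nm < lam * (S * Nm)"
    using \<open>0 < S\<close> Nm_pos lam_gt_1 by simp
  also have "\<dots> = Nf * M"
    using boundary by (simp add: M_def S_def ac_simps)
  also have "\<dots> < Nf_eff * M"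
    using Nf_lt_Nf_eff \<open>0 < M\<close> by (rule mult_strict_right_mono)
  finally have "macro_value M < small_value S"
    using macro_value_less_small_value_iff[OF \<open>0 < M\<close> \<open>0 < S\<close>] by simp
  moreover have "0 < small_value S"
    using \<open>0 < S\<close> Nf_pos lam_gt_1 R0_pos by (simp add: unit_revenue_pos)
  then have "small_value S \<le> macro_value M"
    by (rule margin_shift_conditions_imp_le[OF less_imp_le al_pos al_lt_1
          \<open>0 \<le> u\<close> \<open>u \<le> 1\<close> \<open>0 \<le> v\<close> \<open>v \<le> 1\<close> shift1 shift2])
  ultimately show False by simp
qed

lemma strict_separation_excess_small_absurd:
  assumes br1: "best_response B1 B01 (b1M, b1S) (b2M, b2S)"
    and br2: "best_response B2 B02 (b2M, b2S) (b1M, b1S)"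
    and "0 \<le> B01" "B01 < B1" "0 \<le> B02" "B02 < b2S"
    and min1: "B01 * (Nf_eff + Nm) \<le> Nf_eff * B1"
    and excess: "Nf_eff * b2M < b2S * Nm"
    and "0 < b1M + b2M"
    and strict1: "(b1M + b2M) * Nf < lam * (b1S + b2S) * Nm"
  shows False
proof -
  have f1: "0 \<le> b1M" "B01 \<le> b1S" "b1M + b1S \<le> B1" and f2: "0 \<le> b2M" "B02 \<le> b2S"
    using best_response_feasible[OF br1] best_response_feasible[OF br2] by (auto simp: feasible_def)
  define M S where "M = b1M + b2M" and "S = b1S + b2S"
  have "0 < M" "0 < S" and swap: "b2M + b1M = M" "b2S + b1S = S"
    using assms f1 by (auto simp: M_def S_def)
  define u v where "u = b2S / S" and "v = b2M / M"
  have one_minus: "1 - u = b1S / S" "1 - v = b1M / M"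
    using \<open>0 < M\<close> \<open>0 < S\<close> by (simp_all add: u_def v_def M_def S_def field_simps)
  have "0 < u" "u \<le> 1" "0 \<le> v" "v \<le> 1"
    using assms f1 f2 \<open>0 < M\<close> \<open>0 < S\<close> by (simp_all add: u_def v_def M_def S_def)
  have v_pos: "0 < v \<longleftrightarrow> 0 < b2M" and v_lt_1: "v < 1 \<longleftrightarrow> 0 < b1M"
    using \<open>0 < M\<close> by (auto simp: v_def M_def field_simps)
  have strict2: "(b2M + b1M) * Nf < lam * (b2S + b1S) * Nm"
    using strict1 by (simp add: ac_simps)
  have shift1: "small_value S * (1 - al * (1 - u)) \<le> macro_value M * (1 - al * (1 - v))" if "v < 1"
    using best_response_macro_condition[OF br1 _ f2(1) _ less_imp_le[OF strict1]]
      that v_lt_1 \<open>0 < S\<close> one_minus by (simp add: M_def S_def)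
  have shift2: "small_value S * (1 - al * u) \<le> macro_value M * (1 - al * v)" if "0 < v"
    using best_response_macro_condition[OF br2 _ f1(1) _ less_imp_le[OF strict2]]
      that v_pos \<open>0 < S\<close> by (simp add: u_def v_def swap)
  have back1: "macro_value M * (1 - al * (1 - v)) \<le> small_value S * (1 - al * (1 - u))"
    if "B01 < b1S"
    using best_response_small_condition[OF br1 that _ _ strict1] \<open>0 < M\<close> \<open>0 < S\<close> one_minus
    by (simp add: M_def S_def)
  have back2: "macro_value M * (1 - al * v) \<le> small_value S * (1 - al * u)"
    using best_response_small_condition[OF br2 \<open>B02 < b2S\<close> _ _ strict2] \<open>0 < M\<close> \<open>0 < S\<close>
    by (simp add: u_def v_def swap)
  have full1: "b1M + b1S = B1"
    using best_response_full_band[OF br1 f2(1) _ _ strict1] \<open>0 < M\<close> \<open>0 < S\<close>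
    by (simp add: M_def S_def)
  have min1_binding: "(1 - u) * S * Nm \<le> Nf_eff * ((1 - v) * M)" if "b1S = B01"
  proof -
    have "B01 * (Nf_eff + Nm) \<le> Nf_eff * (b1M + B01)"
      using min1 full1 that by simp
    then have "b1S * Nm \<le> Nf_eff * b1M"
      using that by (simp add: algebra_simps)
    then show ?thesis
      using \<open>0 < M\<close> \<open>0 < S\<close> one_minus by simp
  qed
  have "0 < small_value S"
    using \<open>0 < S\<close> Nf_pos lam_gt_1 R0_pos by (simp add: unit_revenue_pos)
  then show False
  proof (rule margin_conditions_absurd[OF _ al_pos al_lt_1 \<open>0 < S\<close> \<open>0 < M\<close> Nm_pos
        \<open>0 < u\<close> \<open>u \<le> 1\<close> \<open>0 \<le> v\<close> \<open>v \<le> 1\<close> _ _ shift1 shift2 back2])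
    show "Nf_eff * (v * M) < u * S * Nm"
      using excess \<open>0 < M\<close> \<open>0 < S\<close> by (simp add: u_def v_def)
    show "small_value S < macro_value M" if "Nf_eff * M < S * Nm"
      using small_value_less_macro_value_iff[OF \<open>0 < M\<close> \<open>0 < S\<close>] that by simp
    show "macro_value M * (1 - al * (1 - v)) \<le> small_value S * (1 - al * (1 - u))
          \<or> (1 - u) * S * Nm \<le> Nf_eff * ((1 - v) * M)"
      using back1 min1_binding f1(2) by force
    show "macro_value M * (1 - al * (1 - v)) \<le> small_value S * (1 - al * (1 - u))" if "v = 1"
      using back1 that v_lt_1 f1 full1 \<open>B01 < B1\<close> by simp
  qed
qed

lemma BS_NE_eq: "BS_NE Nm Nf lam al B = Nf_eff * B / (Nf_eff + Nm)"
  by (simp add: BS_NE_def ac_simps)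

lemma constrained_NE_small_cells_at_minimum:
  assumes NE: "constrained_NE Nm Nf lam al R0 B1 B2 B01 B02 (b1M, b1S) (b2M, b2S)"
    and "0 < B1" "0 \<le> B01" "0 \<le> B02"
    and "B01 \<le> BS_NE Nm Nf lam al B1" "BS_NE Nm Nf lam al B2 < B02"
  shows "b2S = B02"
proof (rule ccontr)
  have br1: "best_response B1 B01 (b1M, b1S) (b2M, b2S)"
    and br2: "best_response B2 B02 (b2M, b2S) (b1M, b1S)"
    using NE constrained_NE_iff by blast+
  have f1: "0 \<le> b1M" "B01 \<le> b1S" and f2: "0 \<le> b2M" "B02 \<le> b2S" "b2M + b2S \<le> B2"
    using best_response_feasible[OF br1] best_response_feasible[OF br2] by (auto simp: feasible_def)
  have "0 < Nf_eff + Nm"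
    using Nf_lt_Nf_eff Nf_pos Nm_pos by linarith
  then have min1: "B01 * (Nf_eff + Nm) \<le> Nf_eff * B1"
    and min2: "Nf_eff * B2 < B02 * (Nf_eff + Nm)"
    using assms(5,6) by (simp_all add: BS_NE_eq pos_le_divide_eq pos_divide_less_eq)
  have "B01 * (Nf_eff + Nm) < B1 * (Nf_eff + Nm)"
    using min1 mult_pos_pos[OF \<open>0 < B1\<close> Nm_pos] by (simp add: algebra_simps)
  then have "B01 < B1"
    using \<open>0 < Nf_eff + Nm\<close> by simp
  assume "b2S \<noteq> B02"
  with f2 have "B02 < b2S" by simp
  have "Nf_eff * (b2M + b2S) \<le> Nf_eff * B2"
    using f2(3) Nf_lt_Nf_eff Nf_pos by (intro mult_left_mono) auto
  also have "\<dots> < B02 * (Nf_eff + Nm)"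
    by (rule min2)
  also have "\<dots> < b2S * (Nf_eff + Nm)"
    using \<open>B02 < b2S\<close> \<open>0 < Nf_eff + Nm\<close> by simp
  finally have excess: "Nf_eff * b2M < b2S * Nm"
    by (simp add: algebra_simps)
  consider "b1M = 0" "b2M = 0" | "0 < b1M + b2M"
    using f1 f2 by linarith
  then show False
  proof cases
    case 1
    then show False
      using best_response_without_macro_at_minimum[of B2 B02 b2S b1S] br2 assms(3,4) f1(2)
        \<open>b2S \<noteq> B02\<close> by simp
  next
    case 2
    then consider "(b1M + b2M) * Nf = lam * (b1S + b2S) * Nm"
      | "(b1M + b2M) * Nf < lam * (b1S + b2S) * Nm"
      using best_responses_separate[OF br1 br2 assms(3,4)] by fastforce
    then show False
      by cases (use best_responses_off_regime_boundary[OF br1 br2 assms(3,4) 2]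
          strict_separation_excess_small_absurd[OF br1 br2 assms(3) \<open>B01 < B1\<close> assms(4)
            \<open>B02 < b2S\<close> min1 excess 2] in blast)+
  qed
qed

end

theorem proposition2:
  fixes Nm Nf lam alpha R0 B1 B2 B01 B02 b1M b1S b2M b2S :: real
  assumes "0 < Nm" and "0 < Nf" and "1 < lam" and "0 < alpha" and "alpha < 1"
    and "0 < R0" and "0 < B1" and "0 < B2"
    and "0 \<le> B01" and "B01 \<le> B1" and "0 \<le> B02" and "B02 \<le> B2"
    and "BS_NE Nm Nf lam alpha B1 \<ge> B01"
    and "BS_NE Nm Nf lam alpha B2 < B02"
    and "constrained_NE Nm Nf lam alpha R0 B1 B2 B01 B02 (b1M, b1S) (b2M, b2S)"
  shows "(b1S = B01 \<and> b2S = B02) \<or> (b1S > B01 \<and> b2S = B02)"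
proof -
  interpret spectrum_market Nm Nf lam alpha R0
    using assms(1-6) by unfold_locales
  have "b2S = B02"
    using constrained_NE_small_cells_at_minimum assms(7,9,11,13-15) by blast
  moreover have "B01 \<le> b1S"
    using assms(15) by (simp add: constrained_NE_def feasible_def)
  ultimately show ?thesis
    by auto
qed

end
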